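(* Assume $g$ satisfies (Hg) and let $a\in(0,1)$, $k>0$. Then there exists $d_0=d_0(a,k)>0$ such that for every $0<d\le d_0$ and every sequence $(s_i)_{i\in\mathbb Z}\subset\{0,1\}$ there is at least one function $\Phi:\mathbb R\to\mathbb R$ satisfying $$0=d\big(k\Phi(\xi+1)-(k+1)\Phi(\xi)+\Phi(\xi-1)\big)+g(\Phi(\xi);a)\quad\text{for all }\xi\in\mathbb R$$ (i.e. a solution of the traveling wave equation with $c=0$) such that for every $i\in\mathbb Z$: $\Phi(i)\in[0,a)$ if $s_i=0$, and $\Phi(i)\in(a,1]$ if $s_i=1$.
   Context: A function $g:\mathbb R\times[0,1]\to\mathbb R$, $(u,a)\mapsto g(u;a)$, satisfies (Hg) if it is $C^1$ and for every $a\in(0,1)$: $g(0;a)=g(a;a)=g(1;a)=0$, $g'(0;a)<0$, $g'(1;a)<0$, $g'(a;a)>0$ (where $g'=\partial_u g$), $g(v;a)>0$ for $v\in(-\infty,0)\cup(a,1)$ and $g(v;a)<0$ for $v\in(0,a)\cup(1,\infty)$. *)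

theory Defs
  imports "HOL-Analysis.Analysis"
begin

definition C1_on_strip :: "(real \<Rightarrow> real \<Rightarrow> real) \<Rightarrow> bool" where
  "C1_on_strip g \<longleftrightarrow>
     (\<exists>D :: real \<times> real \<Rightarrow> (real \<times> real) \<Rightarrow>\<^sub>L real.
        (\<forall>x \<in> UNIV \<times> {0..1}. ((\<lambda>(u, a). g u a) has_derivative blinfun_apply (D x))
                                  (at x within UNIV \<times> {0..1}))
        \<and> continuous_on (UNIV \<times> {0..1}) D)"

definition Hg :: "(real \<Rightarrow> real \<Rightarrow> real) \<Rightarrow> bool" where
  "Hg g \<longleftrightarrow> C1_on_strip g \<and>
     (\<forall>a. 0 < a \<and> a < 1 \<longrightarrow>
        g 0 a = 0 \<and> g a a = 0 \<and> g 1 a = 0 \<and>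
        deriv (\<lambda>u. g u a) 0 < 0 \<and> deriv (\<lambda>u. g u a) 1 < 0 \<and> deriv (\<lambda>u. g u a) a > 0 \<and>
        (\<forall>v. (v < 0 \<or> (a < v \<and> v < 1)) \<longrightarrow> g v a > 0) \<and>
        (\<forall>v. ((0 < v \<and> v < a) \<or> 1 < v) \<longrightarrow> g v a < 0))"

end

theory Submission
  imports Defs
begin

text \<open>For fixed coupling strength d the lattice equation at site n reads
  H(w, x) = g x + d (w - (k + 1) x) = 0 with w = k U(n+1) + U(n-1). Prescribe for each site
  an interval [L n, R n], equal to [0, a/2] or [(1+a)/2, 1] according to the pattern. If d is
  small, H(w, L n) \<ge> 0 \<ge> H(w, R n) for all admissible neighbour values w, so the largest root
  of H(w, -) in [L n, R n] exists; since H increases in w, this root depends monotonically on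
  the neighbours. A monotone self-map of the box of sequences has a fixed point (Tarski), which
  solves the lattice equation; extending it as a step function solves the equation on R.\<close>

lemma C1_on_strip_continuous_slice:
  assumes "C1_on_strip g" and "0 \<le> a" and "a \<le> 1"
  shows "continuous_on UNIV (\<lambda>u. g u a)"
proof -
  from assms(1) obtain D :: "real \<times> real \<Rightarrow> (real \<times> real) \<Rightarrow>\<^sub>L real" where
    "\<forall>x \<in> UNIV \<times> {0..1}. ((\<lambda>(u, v). g u v) has_derivative D x) (at x within UNIV \<times> {0..1})"
    unfolding C1_on_strip_def by blast
  then have "continuous_on (UNIV \<times> {0..1}) (\<lambda>(u, v). g u v)"
    unfolding continuous_on_eq_continuous_within using has_derivative_continuous by blast
  then have "continuous_on UNIV (\<lambda>u. (\<lambda>(u, v). g u v) (u, a))"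
    by (rule continuous_on_compose2) (auto intro!: continuous_intros simp: assms(2,3))
  then show ?thesis by simp
qed

lemma monotone_self_map_of_box_has_fixed_point:
  fixes T :: "('i \<Rightarrow> 'a::conditionally_complete_lattice) \<Rightarrow> 'i \<Rightarrow> 'a"
  assumes "L \<le> R"
    and maps_box: "\<And>u. L \<le> u \<Longrightarrow> u \<le> R \<Longrightarrow> L \<le> T u \<and> T u \<le> R"
    and mono: "\<And>u v. L \<le> u \<Longrightarrow> u \<le> v \<Longrightarrow> v \<le> R \<Longrightarrow> T u \<le> T v"
  shows "\<exists>u. L \<le> u \<and> u \<le> R \<and> T u = u"
proof -
  define S where "S = {u. L \<le> u \<and> u \<le> R \<and> u \<le> T u}"
  define U where "U n = (SUP u\<in>S. u n)" for n
  have "L \<in> S"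
    unfolding S_def using maps_box[of L] \<open>L \<le> R\<close> by auto
  have bdd: "bdd_above ((\<lambda>u. u n) ` S)" for n
    by (rule bdd_aboveI[of _ "R n"]) (auto simp: S_def le_fun_def)
  have below_U: "u \<le> U" if "u \<in> S" for u
    unfolding le_fun_def U_def using cSUP_upper[OF that bdd] by blast
  have "L \<le> U" using below_U[OF \<open>L \<in> S\<close>] .
  moreover have "U \<le> R"
    unfolding le_fun_def U_def using \<open>L \<in> S\<close> by (auto intro!: cSUP_least simp: S_def le_fun_def)
  ultimately have "L \<le> T U" "T U \<le> R" using maps_box by auto
  have "u \<le> T U" if "u \<in> S" for u
    using that mono[of u U] below_U[OF that] \<open>U \<le> R\<close> unfolding S_def by (blast intro: order_trans)
  then have "U \<le> T U"
    unfolding le_fun_def U_def using \<open>L \<in> S\<close> by (auto intro!: cSUP_least simp: le_fun_def)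
  then have "T U \<in> S"
    unfolding S_def using \<open>L \<le> T U\<close> \<open>T U \<le> R\<close> mono[OF \<open>L \<le> U\<close> _ \<open>T U \<le> R\<close>] by auto
  then have "T U \<le> U" by (rule below_U)
  with \<open>U \<le> T U\<close> \<open>L \<le> U\<close> \<open>U \<le> R\<close> show ?thesis by (blast intro: order_antisym)
qed

lemma Sup_nonneg_set_is_root:
  fixes f :: "real \<Rightarrow> real"
  assumes cont: "continuous_on {L..R} f" and "L \<le> R" and "0 \<le> f L" and "f R \<le> 0"
  defines "c \<equiv> Sup {x \<in> {L..R}. 0 \<le> f x}"
  shows "c \<in> {L..R}" and "f c = 0"
proof -
  let ?S = "{x \<in> {L..R}. 0 \<le> f x}"
  have "closed ?S"
    using continuous_closed_preimage[OF cont, of "{0..}"] by (simp add: vimage_def Int_def)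
  moreover have "?S \<noteq> {}" using \<open>L \<le> R\<close> \<open>0 \<le> f L\<close> by auto
  moreover have bdd: "bdd_above ?S" by (rule bdd_aboveI[of _ R]) auto
  ultimately have "c \<in> ?S" unfolding c_def by (rule closed_contains_Sup[rotated -1])
  then show "c \<in> {L..R}" by simp
  show "f c = 0"
  proof (rule ccontr)
    assume "f c \<noteq> 0"
    with \<open>c \<in> ?S\<close> have "0 < f c" "c < R" using \<open>f R \<le> 0\<close> by (auto simp: less_le)
    then obtain y where "c \<le> y" "y \<le> R" "f y = 0"
      using IVT2'[of f R 0 c] \<open>f R \<le> 0\<close> continuous_on_subset[OF cont] \<open>c \<in> ?S\<close> by force
    with \<open>c \<in> ?S\<close> have "y \<in> ?S" by simp
    then have "y \<le> c" unfolding c_def using bdd by (rule cSup_upper)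
    with \<open>c \<le> y\<close> \<open>f y = 0\<close> \<open>0 < f c\<close> show False by simp
  qed
qed

lemma Sup_nonneg_set_mono:
  fixes f h :: "real \<Rightarrow> real"
  assumes "\<And>x. x \<in> {L..R} \<Longrightarrow> f x \<le> h x" and "\<exists>x \<in> {L..R}. 0 \<le> f x"
  shows "Sup {x \<in> {L..R}. 0 \<le> f x} \<le> Sup {x \<in> {L..R}. 0 \<le> h x}"
  using assms by (intro cSup_subset_mono) (auto intro: bdd_aboveI[of _ R] order_trans)

lemma lattice_equation_has_solution_in_box:
  fixes G :: "real \<Rightarrow> real" and L R :: "int \<Rightarrow> real"
  assumes cont: "continuous_on UNIV G" and "0 \<le> d" and "0 \<le> k"
    and box: "\<And>n. 0 \<le> L n" "L \<le> R" "\<And>n. R n \<le> 1"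
    and lower: "\<And>n. d * (k + 1) * L n \<le> G (L n)"
    and upper: "\<And>n. G (R n) + d * (k + 1) * (1 - R n) \<le> 0"
  shows "\<exists>U. L \<le> U \<and> U \<le> R \<and>
           (\<forall>n. d * (k * U (n + 1) - (k + 1) * U n + U (n - 1)) + G (U n) = 0)"
proof -
  define H where "H w x = G x + d * (w - (k + 1) * x)" for w x
  define W where "W u n = k * u (n + 1) + u (n - 1)" for u :: "int \<Rightarrow> real" and n
  define T where "T u n = Sup {x \<in> {L n..R n}. 0 \<le> H (W u n) x}" for u n
  have H_mono: "H w x \<le> H w' x" if "w \<le> w'" for w w' x
    unfolding H_def using that \<open>0 \<le> d\<close> by (simp add: mult_left_mono)
  have W_range: "0 \<le> W u n \<and> W u n \<le> k + 1" if "L \<le> u" "u \<le> R" for u n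
  proof -
    have "0 \<le> u m \<and> u m \<le> 1" for m
      using that box(1,3)[of m] unfolding le_fun_def by (meson order_trans)
    then show ?thesis
      unfolding W_def using \<open>0 \<le> k\<close> by (simp add: add_mono mult_left_le)
  qed
  have H_L: "0 \<le> H w (L n)" if "0 \<le> w" for w n
    using lower[of n] H_mono[OF that, of "L n"] by (simp add: H_def algebra_simps)
  have H_R: "H w (R n) \<le> 0" if "w \<le> k + 1" for w n
    using upper[of n] H_mono[OF that, of "R n"] by (simp add: H_def algebra_simps)
  have T_root: "T u n \<in> {L n..R n} \<and> H (W u n) (T u n) = 0" if "L \<le> u" "u \<le> R" for u n
  proof -
    have "continuous_on {L n..R n} (H (W u n))"
      unfolding H_def by (intro continuous_intros continuous_on_subset[OF cont]) auto
    moreover have "L n \<le> R n" using box(2) by (simp add: le_fun_def)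
    ultimately show ?thesis
      unfolding T_def using Sup_nonneg_set_is_root H_L H_R W_range[OF that] by blast
  qed
  have T_mono: "T u \<le> T v" if "L \<le> u" "u \<le> v" "v \<le> R" for u v
  proof (rule le_funI)
    fix n
    have "W u n \<le> W v n"
      using \<open>u \<le> v\<close> \<open>0 \<le> k\<close> unfolding W_def le_fun_def by (simp add: add_mono mult_left_mono)
    moreover have "u \<le> R" using \<open>u \<le> v\<close> \<open>v \<le> R\<close> by (rule order_trans)
    then have "0 \<le> H (W u n) (L n)" using H_L W_range \<open>L \<le> u\<close> by blast
    moreover have "L n \<in> {L n..R n}" using box(2) by (simp add: le_fun_def)
    ultimately show "T u n \<le> T v n"
      unfolding T_def using H_mono by (intro Sup_nonneg_set_mono) blast+
  qed
  obtain U where "L \<le> U" "U \<le> R" "T U = U"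
    using monotone_self_map_of_box_has_fixed_point[of L R T] box(2) T_root T_mono
    by (force simp: le_fun_def)
  moreover have "H (W U n) (U n) = 0" for n
    using T_root[OF \<open>L \<le> U\<close> \<open>U \<le> R\<close>, of n] \<open>T U = U\<close> by simp
  ultimately show ?thesis
    unfolding H_def W_def by (auto simp: algebra_simps)
qed

lemma stationary_wave_with_pattern_exists:
  fixes G :: "real \<Rightarrow> real" and P :: "int \<Rightarrow> bool"
  assumes cont: "continuous_on UNIV G" and "G 0 = 0" and "G 1 = 0"
    and "b0 \<in> {0..1}" and "b1 \<in> {0..1}" and "0 \<le> d" and "0 \<le> k"
    and small_b0: "d * (k + 1) \<le> - G b0" and small_b1: "d * (k + 1) \<le> G b1"
  shows "\<exists>\<Phi> :: real \<Rightarrow> real.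
           (\<forall>\<xi>. d * (k * \<Phi> (\<xi> + 1) - (k + 1) * \<Phi> \<xi> + \<Phi> (\<xi> - 1)) + G (\<Phi> \<xi>) = 0) \<and>
           (\<forall>i. \<not> P i \<longrightarrow> \<Phi> (of_int i) \<in> {0..b0}) \<and> (\<forall>i. P i \<longrightarrow> \<Phi> (of_int i) \<in> {b1..1})"
proof -
  define L where "L n = (if P n then b1 else 0)" for n
  define R where "R n = (if P n then 1 else b0)" for n
  have "0 \<le> d * (k + 1)" using \<open>0 \<le> d\<close> \<open>0 \<le> k\<close> by simp
  then have "d * (k + 1) * b1 \<le> d * (k + 1)" and "d * (k + 1) * (1 - b0) \<le> d * (k + 1)"
    using \<open>b0 \<in> {0..1}\<close> \<open>b1 \<in> {0..1}\<close> by (simp_all add: mult_left_le)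
  then have "d * (k + 1) * L n \<le> G (L n)" and "G (R n) + d * (k + 1) * (1 - R n) \<le> 0" for n
    using small_b0 small_b1 \<open>G 0 = 0\<close> \<open>G 1 = 0\<close> by (auto simp: L_def R_def)
  moreover have "0 \<le> L n" "R n \<le> 1" "L n \<le> R n" for n
    using \<open>b0 \<in> {0..1}\<close> \<open>b1 \<in> {0..1}\<close> by (auto simp: L_def R_def)
  ultimately obtain U where "L \<le> U" "U \<le> R"
    and U_eq: "\<forall>n. d * (k * U (n + 1) - (k + 1) * U n + U (n - 1)) + G (U n) = 0"
    using lattice_equation_has_solution_in_box[OF cont \<open>0 \<le> d\<close> \<open>0 \<le> k\<close>, of L R]
    by (auto simp: le_fun_def)
  define \<Phi> where "\<Phi> \<xi> = U \<lfloor>\<xi>\<rfloor>" for \<xi> :: real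
  have "d * (k * \<Phi> (\<xi> + 1) - (k + 1) * \<Phi> \<xi> + \<Phi> (\<xi> - 1)) + G (\<Phi> \<xi>) = 0" for \<xi>
    using U_eq unfolding \<Phi>_def by (simp flip: one_add_floor)
  moreover have "L i \<le> \<Phi> i" "\<Phi> i \<le> R i" for i
    using \<open>L \<le> U\<close> \<open>U \<le> R\<close> by (auto simp: \<Phi>_def le_fun_def)
  ultimately show ?thesis
    by (intro exI[of _ \<Phi>]) (metis L_def R_def atLeastAtMost_iff)
qed

theorem proposition2p4:
  fixes g :: "real \<Rightarrow> real \<Rightarrow> real" and a k :: real
  assumes "Hg g" and "0 < a" and "a < 1" and "k > 0"
  shows "\<exists>d0 > 0. \<forall>d. 0 < d \<and> d \<le> d0 \<longrightarrow>
           (\<forall>s :: int \<Rightarrow> nat. (\<forall>i. s i \<in> {0, 1}) \<longrightarrow>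
              (\<exists>\<Phi> :: real \<Rightarrow> real.
                 (\<forall>\<xi>. 0 = d * (k * \<Phi> (\<xi> + 1) - (k + 1) * \<Phi> \<xi> + \<Phi> (\<xi> - 1)) + g (\<Phi> \<xi>) a) \<and>
                 (\<forall>i. (s i = 0 \<longrightarrow> \<Phi> (of_int i) \<in> {0..<a}) \<and>
                      (s i = 1 \<longrightarrow> \<Phi> (of_int i) \<in> {a<..1}))))"
proof -
  define b0 b1 where "b0 = a / 2" and "b1 = (1 + a) / 2"
  have g: "g 0 a = 0" "g 1 a = 0" "g b0 a < 0" "0 < g b1 a" "continuous_on UNIV (\<lambda>u. g u a)"
    using assms C1_on_strip_continuous_slice[of g a] unfolding Hg_def b0_def b1_def by auto
  have "b0 < a" "a < b1" using \<open>0 < a\<close> \<open>a < 1\<close> unfolding b0_def b1_def by auto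
  define d0 where "d0 = min (- g b0 a) (g b1 a) / (k + 1)"
  show ?thesis
  proof (intro exI[of _ d0] conjI allI impI)
    show "0 < d0" unfolding d0_def using g \<open>k > 0\<close> by simp
    fix d and s :: "int \<Rightarrow> nat"
    assume "0 < d \<and> d \<le> d0"
    then have "d * (k + 1) \<le> - g b0 a" "d * (k + 1) \<le> g b1 a" "0 \<le> d"
      using \<open>k > 0\<close> unfolding d0_def by (simp_all add: field_simps)
    then obtain \<Phi> :: "real \<Rightarrow> real"
      where \<Phi>_eq: "\<And>\<xi>. d * (k * \<Phi> (\<xi> + 1) - (k + 1) * \<Phi> \<xi> + \<Phi> (\<xi> - 1)) + g (\<Phi> \<xi>) a = 0"
        and \<Phi>_low: "\<And>i. s i \<noteq> 1 \<Longrightarrow> \<Phi> (of_int i) \<in> {0..b0}"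
        and \<Phi>_high: "\<And>i. s i = 1 \<Longrightarrow> \<Phi> (of_int i) \<in> {b1..1}"
      using stationary_wave_with_pattern_exists[OF g(5,1,2), of b0 b1 d k "\<lambda>i. s i = 1"]
        \<open>0 < a\<close> \<open>a < 1\<close> \<open>k > 0\<close> unfolding b0_def b1_def by auto
    have "s i = 0 \<longrightarrow> \<Phi> (of_int i) \<in> {0..<a}" "s i = 1 \<longrightarrow> \<Phi> (of_int i) \<in> {a<..1}" for i
      using \<Phi>_low[of i] \<Phi>_high[of i] \<open>b0 < a\<close> \<open>a < b1\<close> by auto
    with \<Phi>_eq[symmetric] show "\<exists>\<Phi> :: real \<Rightarrow> real.
        (\<forall>\<xi>. 0 = d * (k * \<Phi> (\<xi> + 1) - (k + 1) * \<Phi> \<xi> + \<Phi> (\<xi> - 1)) + g (\<Phi> \<xi>) a) \<and>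
        (\<forall>i. (s i = 0 \<longrightarrow> \<Phi> (of_int i) \<in> {0..<a}) \<and> (s i = 1 \<longrightarrow> \<Phi> (of_int i) \<in> {a<..1}))"
      by blast
  qed
qed

end
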